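(* Let $M$, $\alpha,\beta,\gamma$ satisfy the standing assumptions described in the context, let $T>0$ and $b$ be as fixed in the context, let $N>0$, and for $\xi\in\mathbb{R}^n$ let $W(t,\xi)\in\mathbb{C}^2$ be any solution on $[T,\infty)$ of $$\partial_t W=\begin{pmatrix}-2b(t)& i|\xi|\\ i|\xi|&0\end{pmatrix}W .$$ Then there exists a positive constant $K_2$ such that, for all $(t,\xi)\in Z_\Psi$ with $\xi\ne0$: if $\alpha>0$, then $K_2^{-1}|W(T,\xi)|\le|W(t,\xi)|\le K_2|W(T,\xi)|$; if $\alpha\le0$, then $K_2^{-1}|W(t_\xi,\xi)|\le|W(t,\xi)|\le K_2|W(t_\xi,\xi)|$.
   Context: Standing assumptions: $M:[0,\infty)\to\mathbb{R}$ continuous; $\alpha\le1$, $\beta<1$, $\gamma>0$ with $\gamma\ge\beta\ge(\alpha+1)/2$ if $\alpha\ne0$ and $\gamma\ge\beta>1/2$ if $\alpha=0$; $M$ satisfies: (M1) if $\alpha\ge 0$, $\int_0^t\big|\int_s^\infty\int_\sigma^\infty M(\tau)\,d\tau\,d\sigma\big|\,ds\lesssim(1+t)^{\alpha}$; if $\alpha\le 0$, $\int_t^\infty\big|\int_s^\infty\int_\sigma^\infty M(\tau)\,d\tau\,d\sigma\big|\,ds\lesssim(1+t)^{\alpha}$ (both when $\alpha=0$); (M2) $|M(t)|\lesssim(1+t)^{-2\beta}$; (M3) $\big|\int_t^\infty M\big|\lesssim(1+t)^{-\gamma}$, $\int_t^\infty\big(\int_s^\infty M\big)^2ds\lesssim(1+t)^{-\gamma}$,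 $\int_0^\infty\int_t^\infty\big(\int_s^\infty M\big)^2\,ds\,dt<\infty$; and $\sup_{t\ge0}(1+t)^\alpha\int_t^\infty\int_s^\infty(\int_\sigma^\infty M)^2\,d\sigma\,ds<\infty$; here $f\lesssim g$ means $f\le Cg$ with $C$ independent of $t$. Definition of $b$ and $T$: $q_1:=M$, $Q_k(t):=-\int_t^\infty q_k$, $q_k:=\sum_{j=1}^{k-1}Q_jQ_{k-j}$ ($k\ge2$), $\phi(t):=-\int_t^\infty Q_2$; $T>0$ is chosen so that $|\int_t^\infty Q_1(s)\,ds|\le1$ and $\phi(t)\le6^{-4}$ for all $t\ge T$, and $b(t):=\sum_{k\ge1}Q_k(t)$ on $[T,\infty)$. Zones: $Z_\Psi:=\{(t,\xi)\in[T,\infty)\times\mathbb{R}^n:(1+t)^\alpha|\xi|\le N\}$; for $\alpha\ne0$, $\xi\ne0$, $t_\xi:=\max\{T,(N|\xi|^{-1})^{1/\alpha}-1\}$, and for $\alpha=0$ set $t_\xi:=T$. *)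

theory Defs
  imports "HOL-Analysis.Analysis"
begin

definition has_tail :: "(real \<Rightarrow> real) \<Rightarrow> real \<Rightarrow> bool" where
  "has_tail f t \<longleftrightarrow> (\<forall>R\<ge>t. f integrable_on {t..R}) \<and>
                     (\<exists>L. ((\<lambda>R. integral {t..R} f) \<longlongrightarrow> L) at_top)"

definition tail :: "(real \<Rightarrow> real) \<Rightarrow> real \<Rightarrow> real" where
  "tail f t = Lim at_top (\<lambda>R. integral {t..R} f)"

function Qk :: "(real \<Rightarrow> real) \<Rightarrow> nat \<Rightarrow> real \<Rightarrow> real" where
  "Qk M 0 t = 0"
| "Qk M (Suc 0) t = - tail M t"
| "Qk M (Suc (Suc n)) t =
     - tail (\<lambda>s. \<Sum>j\<in>{1..Suc n}. Qk M j s * Qk M (Suc (Suc n) - j) s) t"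
  by pat_completeness auto
termination
  by (relation "Wellfounded.measure (\<lambda>(M, k, t). k)") auto

definition phi :: "(real \<Rightarrow> real) \<Rightarrow> real \<Rightarrow> real" where
  "phi M t = - tail (Qk M 2) t"

definition bcoef :: "(real \<Rightarrow> real) \<Rightarrow> real \<Rightarrow> real" where
  "bcoef M t = (\<Sum>k. Qk M (Suc k) t)"

definition standing_assumptions ::
  "(real \<Rightarrow> real) \<Rightarrow> real \<Rightarrow> real \<Rightarrow> real \<Rightarrow> bool" where
  "standing_assumptions M \<alpha> \<beta> \<gamma> \<longleftrightarrow>
    (let I1 = tail M; I2 = tail I1; J = tail (\<lambda>s. (I1 s)\<^sup>2) in
     continuous_on {0..} M \<and>
     \<alpha> \<le> 1 \<and> \<beta> < 1 \<and> \<gamma> > 0 \<and>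
     (\<alpha> \<noteq> 0 \<longrightarrow> \<gamma> \<ge> \<beta> \<and> \<beta> \<ge> (\<alpha> + 1) / 2) \<and>
     (\<alpha> = 0 \<longrightarrow> \<gamma> \<ge> \<beta> \<and> \<beta> > 1 / 2) \<and>
     \<comment> \<open>the improper integrals occurring in (M1)-(M3) exist\<close>
     (\<forall>t\<ge>0. has_tail M t \<and> has_tail I1 t) \<and>
     \<comment> \<open>(M1)\<close>
     (\<alpha> \<ge> 0 \<longrightarrow> (\<exists>C. \<forall>t\<ge>0. integral {0..t} (\<lambda>s. \<bar>I2 s\<bar>) \<le> C * (1 + t) powr \<alpha>)) \<and>
     (\<alpha> \<le> 0 \<longrightarrow> (\<exists>C. \<forall>t\<ge>0. has_tail (\<lambda>s. \<bar>I2 s\<bar>) t \<and>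
                             tail (\<lambda>s. \<bar>I2 s\<bar>) t \<le> C * (1 + t) powr \<alpha>)) \<and>
     \<comment> \<open>(M2)\<close>
     (\<exists>C. \<forall>t\<ge>0. \<bar>M t\<bar> \<le> C * (1 + t) powr (- 2 * \<beta>)) \<and>
     \<comment> \<open>(M3)\<close>
     (\<exists>C. \<forall>t\<ge>0. \<bar>I1 t\<bar> \<le> C * (1 + t) powr (- \<gamma>)) \<and>
     (\<exists>C. \<forall>t\<ge>0. has_tail (\<lambda>s. (I1 s)\<^sup>2) t \<and> J t \<le> C * (1 + t) powr (- \<gamma>)) \<and>
     has_tail J 0 \<and>
     \<comment> \<open>\<open>sup_t (1+t)^\<alpha> \<integral>_t^\<infinity>\<integral>_s^\<infinity>(\<integral>_\<sigma>^\<infinity>M)^2 < \<infinity>\<close>\<close>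
     (\<exists>C. \<forall>t\<ge>0. has_tail J t \<and> (1 + t) powr \<alpha> * tail J t \<le> C))"

definition admissible_T :: "(real \<Rightarrow> real) \<Rightarrow> real \<Rightarrow> bool" where
  "admissible_T M T \<longleftrightarrow> T > 0 \<and>
     (\<forall>t\<ge>T. \<bar>tail (Qk M 1) t\<bar> \<le> 1 \<and> phi M t \<le> 6 powr (-4))"

definition sysmat :: "(real \<Rightarrow> real) \<Rightarrow> real \<Rightarrow> real \<Rightarrow> complex^2^2" where
  "sysmat b r t = vector [vector [- 2 * complex_of_real (b t), \<i> * complex_of_real r],
                          vector [\<i> * complex_of_real r, 0]]"

definition in_Zpsi :: "real \<Rightarrow> real \<Rightarrow> real \<Rightarrow> real \<Rightarrow> 'n::real_normed_vector \<Rightarrow> bool" where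
  "in_Zpsi \<alpha> T N t \<xi> \<longleftrightarrow> t \<ge> T \<and> (1 + t) powr \<alpha> * norm \<xi> \<le> N"

definition t_xi :: "real \<Rightarrow> real \<Rightarrow> real \<Rightarrow> 'n::real_normed_vector \<Rightarrow> real" where
  "t_xi \<alpha> T N \<xi> = (if \<alpha> = 0 then T else max T ((N / norm \<xi>) powr (1 / \<alpha>) - 1))"

end

theory Submission
  imports Defs
begin

(* Let E = |W|^2 and P = |W_1|^2. Along solutions E' = -4 b P, so everything hinges on the
   damping coefficient b = sum_k Q_k. With I1 = int_t^oo M and J = int_t^oo I1^2 one has
   Q_1 = -I1 and Q_2 = -J, and by induction |Q_k| <= c_(k-2) J for k >= 2, where
   c_(m+1) = 2 eps c_m + eps^2 sum_i c_i c_(m-1-i) with eps = 1/36, so that eps^2 = 6^-4 is the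
   bound on phi = int_t^oo J in the choice of T. Since sum_k c_k <= 2, b = -I1 + O(J).
   The leading term is removed by a Lyapunov correction: for G = ln E + 4 I2 P/E, with
   I2' = -I1, one finds |G'| <= 16 J + 4 |I1| |I2| + 4 |xi| |I2|. The first two terms are
   integrable on [T, oo) by the choice of T and by (M1), (M3); by (M1), the integral of the last
   one from the left end of the xi-section of the zone Z_Psi to any later point of it is at most
   C N. Integrating G' gives the two-sided bound; if E vanishes somewhere, Gronwall forces
   W = 0 throughout. *)

section \<open>Tails of improper integrals\<close>

lemma tail_eqI:
  assumes "((\<lambda>R. integral {t..R} f) \<longlongrightarrow> L) at_top"
  shows "tail f t = L"
  using assms unfolding tail_def by (simp add: tendsto_Lim)

lemma tail_tendsto:
  assumes "has_tail f t"
  shows "((\<lambda>R. integral {t..R} f) \<longlongrightarrow> tail f t) at_top"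
  using assms tail_eqI unfolding has_tail_def by metis

lemma has_tail_integrable:
  assumes "has_tail f t" "t \<le> R"
  shows "f integrable_on {t..R}"
  using assms unfolding has_tail_def by blast

lemma
  assumes "has_tail f s" "s \<le> R"
  shows has_tail_shift: "has_tail f R"
    and tail_split: "tail f s = integral {s..R} f + tail f R"
proof -
  have int: "f integrable_on {R..R'}" if "R \<le> R'" for R'
    using integrable_subinterval_real[OF has_tail_integrable[OF assms(1), of R']] assms(2) that
    by simp
  have "\<forall>\<^sub>F R' in at_top. integral {s..R'} f - integral {s..R} f = integral {R..R'} f"
    using eventually_ge_at_top[of R]
  proof eventually_elim
    case (elim R')
    then show ?case
      using Henstock_Kurzweil_Integration.integral_combine[OF assms(2) elim
          has_tail_integrable[OF assms(1)]] assms(2) elim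
      by simp
  qed
  moreover have "((\<lambda>R'. integral {s..R'} f - integral {s..R} f) \<longlongrightarrow> tail f s - integral {s..R} f) at_top"
    by (intro tendsto_diff tail_tendsto assms tendsto_const)
  ultimately have lim: "((\<lambda>R'. integral {R..R'} f) \<longlongrightarrow> tail f s - integral {s..R} f) at_top"
    by (rule Lim_transform_eventually[rotated])
  show "has_tail f R"
    using int lim unfolding has_tail_def by blast
  show "tail f s = integral {s..R} f + tail f R"
    using tail_eqI[OF lim] by simp
qed

lemma has_real_derivative_tail:
  assumes "has_tail f a" "continuous_on {a..b} f" "x \<in> {a..b}"
  shows "(tail f has_real_derivative - f x) (at x within {a..b})"
proof -
  have "((\<lambda>u. tail f a - integral {a..u} f) has_real_derivative 0 - f x) (at x within {a..b})"
    by (intro DERIV_diff DERIV_const integral_has_real_derivative assms)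
  then have "((\<lambda>u. tail f a - integral {a..u} f) has_real_derivative - f x) (at x within {a..b})"
    by simp
  moreover have "tail f a - integral {a..u} f = tail f u" if "u \<in> {a..b}" for u
    using tail_split[OF assms(1), of u] that by simp
  ultimately show ?thesis
    by (rule has_field_derivative_transform_within[OF _ zero_less_one assms(3)])
qed

lemma continuous_on_tail:
  assumes "has_tail f a" "continuous_on {a..b} f"
  shows "continuous_on {a..b} (tail f)"
proof -
  have "continuous_on {a..b} (\<lambda>u. tail f a - integral {a..u} f)"
    by (intro continuous_intros indefinite_integral_continuous_1 integrable_continuous_real assms)
  then show ?thesis
    by (rule continuous_on_eq) (use tail_split[OF assms(1)] in force)
qed

lemma
  assumes "has_tail f t" "has_tail g t"
  shows has_tail_lincomb: "has_tail (\<lambda>s. a * f s + b * g s) t"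
    and tail_lincomb: "tail (\<lambda>s. a * f s + b * g s) t = a * tail f t + b * tail g t"
proof -
  have int: "(\<lambda>s. a * f s + b * g s) integrable_on {t..R}" if "t \<le> R" for R
    using assms that by (intro integrable_add integrable_on_mult_right has_tail_integrable)
  have "\<forall>\<^sub>F R in at_top.
      a * integral {t..R} f + b * integral {t..R} g = integral {t..R} (\<lambda>s. a * f s + b * g s)"
    using eventually_ge_at_top[of t]
    by eventually_elim
      (simp add: integral_add integrable_on_mult_right has_tail_integrable[OF assms(1)]
        has_tail_integrable[OF assms(2)])
  moreover have "((\<lambda>R. a * integral {t..R} f + b * integral {t..R} g)
      \<longlongrightarrow> a * tail f t + b * tail g t) at_top"
    by (intro tendsto_intros tail_tendsto assms)
  ultimately have lim: "((\<lambda>R. integral {t..R} (\<lambda>s. a * f s + b * g s))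
      \<longlongrightarrow> a * tail f t + b * tail g t) at_top"
    by (rule Lim_transform_eventually[rotated])
  show "has_tail (\<lambda>s. a * f s + b * g s) t"
    using int lim unfolding has_tail_def by blast
  show "tail (\<lambda>s. a * f s + b * g s) t = a * tail f t + b * tail g t"
    using tail_eqI[OF lim] .
qed

lemma
  assumes "has_tail f t"
  shows has_tail_uminus: "has_tail (\<lambda>s. - f s) t"
    and tail_uminus: "tail (\<lambda>s. - f s) t = - tail f t"
  using has_tail_lincomb[OF assms assms, of "-1" 0] tail_lincomb[OF assms assms, of "-1" 0] by simp_all

lemma tail_mono:
  assumes "has_tail f t" "has_tail g t" "\<And>s. t \<le> s \<Longrightarrow> f s \<le> g s"
  shows "tail f t \<le> tail g t"
proof (rule tendsto_le[OF _ tail_tendsto[OF assms(2)] tail_tendsto[OF assms(1)]])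
  show "\<forall>\<^sub>F R in at_top. integral {t..R} f \<le> integral {t..R} g"
    using eventually_ge_at_top[of t]
    by eventually_elim (use assms in \<open>auto intro!: integral_le has_tail_integrable\<close>)
qed simp

lemma tail_abs_le:
  assumes "has_tail f t" "has_tail g t" "\<And>s. t \<le> s \<Longrightarrow> \<bar>f s\<bar> \<le> g s"
  shows "\<bar>tail f t\<bar> \<le> tail g t"
  using tail_mono[OF assms(1,2)] tail_mono[OF has_tail_uminus[OF assms(1)] assms(2)]
    tail_uminus[OF assms(1)] assms(3)
  by (force simp: abs_le_iff)

lemma tail_nonneg:
  assumes "has_tail f t" "\<And>s. t \<le> s \<Longrightarrow> 0 \<le> f s"
  shows "0 \<le> tail f t"
proof (rule tendsto_le[OF _ tail_tendsto[OF assms(1)] tendsto_const])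
  show "\<forall>\<^sub>F R in at_top. 0 \<le> integral {t..R} f"
    using eventually_ge_at_top[of t]
    by eventually_elim (use assms in \<open>auto intro!: integral_nonneg has_tail_integrable\<close>)
qed simp

lemma integral_le_tail:
  assumes "has_tail f t" "\<And>s. t \<le> s \<Longrightarrow> 0 \<le> f s" "t \<le> R"
  shows "integral {t..R} f \<le> tail f t"
  using tail_split[OF assms(1,3)] tail_nonneg[OF has_tail_shift[OF assms(1,3)]] assms(2,3) by simp

lemma tail_antimono:
  assumes "has_tail f t" "\<And>s. t \<le> s \<Longrightarrow> 0 \<le> f s" "t \<le> R"
  shows "tail f R \<le> tail f t"
  using tail_split[OF assms(1,3)] integral_nonneg[OF has_tail_integrable[OF assms(1,3)]] assms(2)
  by simp

lemma has_tail_nonneg_bounded: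
  assumes int: "\<And>R. t \<le> R \<Longrightarrow> f integrable_on {t..R}"
    and nonneg: "\<And>s. t \<le> s \<Longrightarrow> 0 \<le> f s"
    and bounded: "\<And>R. t \<le> R \<Longrightarrow> integral {t..R} f \<le> B"
  shows "has_tail f t"
proof -
  define F where "F R = integral {t..R} f" for R
  have mono: "F R1 \<le> F R2" if "t \<le> R1" "R1 \<le> R2" for R1 R2
    unfolding F_def using that int[of R2] nonneg
    by (intro integral_subset_le integrable_subinterval_real[OF int[of R2]]) auto
  have bdd: "bdd_above (F ` {t..})"
    using bounded unfolding F_def by (auto intro!: bdd_aboveI)
  have "(F \<longlongrightarrow> Sup (F ` {t..})) at_top"
  proof (rule order_tendstoI)
    fix y assume "y < Sup (F ` {t..})"
    then obtain R0 where R0: "t \<le> R0" "y < F R0"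
      using less_cSup_iff[OF _ bdd] by auto
    show "\<forall>\<^sub>F R in at_top. y < F R"
      using eventually_ge_at_top[of R0] by eventually_elim (use R0 mono in fastforce)
  next
    fix y assume "Sup (F ` {t..}) < y"
    show "\<forall>\<^sub>F R in at_top. F R < y"
      using eventually_ge_at_top[of t]
    proof eventually_elim
      case (elim R)
      then show ?case
        using \<open>Sup (F ` {t..}) < y\<close> cSup_upper[OF _ bdd, of "F R"] by simp
    qed
  qed
  then show ?thesis
    unfolding has_tail_def F_def using int by blast
qed

lemma has_tail_dominated:
  assumes int: "\<And>R. t \<le> R \<Longrightarrow> f integrable_on {t..R}"
    and dom: "\<And>s. t \<le> s \<Longrightarrow> \<bar>f s\<bar> \<le> g s"
    and g: "has_tail g t"
  shows "has_tail f t"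
proof -
  have g_nonneg: "0 \<le> g s" if "t \<le> s" for s
    using dom[OF that] by linarith
  have "has_tail (\<lambda>s. f s + g s) t"
  proof (rule has_tail_nonneg_bounded[where B = "2 * tail g t"])
    fix R assume R: "t \<le> R"
    note ints = int[OF R] has_tail_integrable[OF g R]
    show "(\<lambda>s. f s + g s) integrable_on {t..R}"
      using ints by (rule integrable_add)
    have "integral {t..R} f \<le> integral {t..R} g"
      using ints by (rule integral_le) (use dom in \<open>auto simp: abs_le_iff\<close>)
    moreover have "integral {t..R} g \<le> tail g t"
      using integral_le_tail[OF g g_nonneg R] .
    ultimately show "integral {t..R} (\<lambda>s. f s + g s) \<le> 2 * tail g t"
      using ints by (simp add: integral_add)
  next
    fix s assume "t \<le> s"
    then show "0 \<le> f s + g s"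
      using dom[of s] by linarith
  qed
  from has_tail_lincomb[OF this g, of 1 "-1"] show ?thesis
    by simp
qed

section \<open>A majorant sequence\<close>

fun majorant :: "real \<Rightarrow> nat \<Rightarrow> real" where
  "majorant \<epsilon> 0 = 1"
| "majorant \<epsilon> (Suc m) =
     2 * \<epsilon> * majorant \<epsilon> m + \<epsilon>\<^sup>2 * (\<Sum>i<m. majorant \<epsilon> i * majorant \<epsilon> (m - 1 - i))"

lemma majorant_nonneg:
  assumes "0 \<le> \<epsilon>"
  shows "0 \<le> majorant \<epsilon> n"
proof (induction n rule: less_induct)
  case (less n)
  then show ?case
    using assms by (cases n) (auto intro!: sum_nonneg add_nonneg_nonneg mult_nonneg_nonneg)
qed

lemma sum_convolution_le_square:
  fixes c :: "nat \<Rightarrow> real"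
  assumes "\<And>i. 0 \<le> c i"
  shows "(\<Sum>i<n. \<Sum>l<i. c l * c (i - 1 - l)) \<le> (\<Sum>i<n. c i)\<^sup>2"
proof (cases n)
  case (Suc n')
  have "(\<Sum>i<n. \<Sum>l<i. c l * c (i - 1 - l)) = (\<Sum>k<n'. \<Sum>l\<le>k. c l * c (k - l))"
    unfolding Suc by (subst sum.lessThan_Suc_shift) (simp add: lessThan_Suc_atMost)
  also have "\<dots> = (\<Sum>(l, j)\<in>{(l, j). l + j < n'}. c l * c j)"
    by (rule sum.triangle_reindex[symmetric])
  also have "\<dots> \<le> (\<Sum>(l, j)\<in>{..<n'} \<times> {..<n'}. c l * c j)"
    by (rule sum_mono2) (auto intro: mult_nonneg_nonneg assms)
  also have "\<dots> = (\<Sum>i<n'. c i)\<^sup>2"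
    by (simp add: power2_eq_square sum_product sum.cartesian_product)
  also have "\<dots> \<le> (\<Sum>i<n. c i)\<^sup>2"
    using assms unfolding Suc by (intro power_mono sum_mono2 sum_nonneg) auto
  finally show ?thesis .
qed simp

lemma sum_majorant_le:
  assumes "0 \<le> \<epsilon>" "(1 + 2 * \<epsilon>)\<^sup>2 \<le> 2"
  shows "(\<Sum>i<n. majorant \<epsilon> i) \<le> 2"
proof (induction n)
  case (Suc n)
  let ?c = "majorant \<epsilon>"
  have conv: "(\<Sum>i<n. \<Sum>l<i. ?c l * ?c (i - 1 - l)) \<le> 2\<^sup>2"
    using sum_convolution_le_square[of ?c n, OF majorant_nonneg[OF assms(1)]] Suc.IH
      power_mono[OF Suc.IH sum_nonneg[OF majorant_nonneg[OF assms(1)]], of 2]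
    by linarith
  have "(\<Sum>i<Suc n. ?c i)
      = 1 + 2 * \<epsilon> * (\<Sum>i<n. ?c i) + \<epsilon>\<^sup>2 * (\<Sum>i<n. \<Sum>l<i. ?c l * ?c (i - 1 - l))"
    by (subst sum.lessThan_Suc_shift) (simp add: sum.distrib sum_distrib_left)
  also have "\<dots> \<le> 1 + 2 * \<epsilon> * 2 + \<epsilon>\<^sup>2 * 2\<^sup>2"
    using conv Suc.IH assms(1) by (intro add_mono mult_left_mono) auto
  also have "\<dots> = (1 + 2 * \<epsilon>)\<^sup>2"
    by (simp add: power2_eq_square algebra_simps)
  finally show ?case
    using assms(2) by linarith
qed simp

lemma
  assumes "0 \<le> \<epsilon>" "(1 + 2 * \<epsilon>)\<^sup>2 \<le> 2"
  shows summable_majorant: "summable (majorant \<epsilon>)"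
    and suminf_majorant_le: "suminf (majorant \<epsilon>) \<le> 2"
  using summableI_nonneg_bounded[OF majorant_nonneg sum_majorant_le]
    suminf_le_const[OF _ sum_majorant_le] assms
  by auto

lemma abs_convolution_le:
  fixes Q c :: "nat \<Rightarrow> real"
  assumes Q: "\<And>j. 2 \<le> j \<Longrightarrow> j \<le> Suc (Suc m) \<Longrightarrow> \<bar>Q j\<bar> \<le> c (j - 2) * x"
  shows "\<bar>\<Sum>j\<in>{1..Suc (Suc m)}. Q j * Q (Suc (Suc (Suc m)) - j)\<bar>
           \<le> 2 * \<bar>Q 1\<bar> * (c m * x) + (\<Sum>i<m. c i * c (m - 1 - i)) * x\<^sup>2"
proof -
  have "{1..Suc (Suc m)} = insert 1 (insert (Suc (Suc m)) {2..Suc m})"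
    by auto
  then have split: "(\<Sum>j\<in>{1..Suc (Suc m)}. Q j * Q (Suc (Suc (Suc m)) - j))
      = 2 * (Q 1 * Q (Suc (Suc m))) + (\<Sum>j\<in>{2..Suc m}. Q j * Q (Suc (Suc (Suc m)) - j))"
    by (simp del: sum.cl_ivl_Suc)
  have outer: "\<bar>2 * (Q 1 * Q (Suc (Suc m)))\<bar> \<le> 2 * \<bar>Q 1\<bar> * (c m * x)"
    using Q[of "Suc (Suc m)"] by (simp add: abs_mult mult_left_mono)
  have "\<bar>\<Sum>j\<in>{2..Suc m}. Q j * Q (Suc (Suc (Suc m)) - j)\<bar>
      \<le> (\<Sum>j\<in>{2..Suc m}. c (j - 2) * c (Suc m - j) * x\<^sup>2)"
  proof (rule order_trans[OF sum_abs sum_mono])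
    fix j assume j: "j \<in> {2..Suc m}"
    have "\<bar>Q j\<bar> * \<bar>Q (Suc (Suc (Suc m)) - j)\<bar> \<le> (c (j - 2) * x) * (c (Suc m - j) * x)"
      using j Q[of j] Q[of "Suc (Suc (Suc m)) - j"]
      by (intro mult_mono) (auto simp: Suc_diff_le intro: order_trans[OF abs_ge_zero])
    then show "\<bar>Q j * Q (Suc (Suc (Suc m)) - j)\<bar> \<le> c (j - 2) * c (Suc m - j) * x\<^sup>2"
      by (simp add: abs_mult power2_eq_square mult_ac)
  qed
  also have "\<dots> = (\<Sum>i<m. c i * c (m - 1 - i)) * x\<^sup>2"
    by (subst sum_distrib_right[symmetric])
      (rule arg_cong[where f="\<lambda>s. s * x\<^sup>2"],
       rule sum.reindex_bij_witness[where i="\<lambda>i. i + 2" and j="\<lambda>j. j - 2"], auto)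
  finally show ?thesis
    unfolding split using outer abs_triangle_ineq[of "2 * (Q 1 * Q (Suc (Suc m)))"]
    by linarith
qed

section \<open>Weighted integrals\<close>

lemma one_plus_powr_le_1:
  fixes u p :: real
  assumes "0 \<le> u" "p \<le> 0"
  shows "(1 + u) powr p \<le> 1"
  using powr_mono[OF assms(2), of "1 + u"] assms(1) by simp

lemma has_real_derivative_one_plus_powr:
  fixes u p :: real
  assumes "0 \<le> u"
  shows "((\<lambda>u. (1 + u) powr p) has_real_derivative p * (1 + u) powr (p - 1)) (at u within S)"
  using assms by (auto intro!: derivative_eq_intros simp: add_pos_nonneg)

text \<open>Integration by parts against the primitive \<open>\<integral>\<^sub>0\<^sup>u g\<close>, which grows slower than the weight
  decays.\<close>

lemma integral_mult_powr_le:
  fixes g :: "real \<Rightarrow> real"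
  assumes cont: "\<And>b. continuous_on {0..b} g" and nonneg: "\<And>u. 0 \<le> u \<Longrightarrow> 0 \<le> g u"
    and growth: "\<And>t. 0 \<le> t \<Longrightarrow> integral {0..t} g \<le> C * (1 + t) powr \<alpha>"
    and "\<alpha> < \<gamma>" "0 < \<gamma>" and ac: "0 \<le> a" "a \<le> c"
  shows "integral {a..c} (\<lambda>u. g u * (1 + u) powr - \<gamma>) \<le> C * (1 + \<gamma> / (\<gamma> - \<alpha>))"
proof -
  define K where "K = C * \<gamma> / (\<gamma> - \<alpha>)"
  define F where "F u = integral {0..u} g" for u
  define \<Psi> where "\<Psi> u = F u * (1 + u) powr - \<gamma> - K * (1 + u) powr (\<alpha> - \<gamma>)" for u
  define \<Psi>' where "\<Psi>' u = F u * (- \<gamma> * (1 + u) powr (- \<gamma> - 1)) + g u * (1 + u) powr - \<gamma>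
      - K * ((\<alpha> - \<gamma>) * (1 + u) powr (\<alpha> - \<gamma> - 1))" for u
  have C: "0 \<le> C"
    using growth[of 0] by simp
  have K: "0 \<le> K"
    unfolding K_def using C assms(4,5) by simp
  have F: "0 \<le> F u" "F u \<le> C * (1 + u) powr \<alpha>" if "0 \<le> u" for u
    using growth[OF that] integral_nonneg[OF integrable_continuous_real[OF cont]] nonneg
    unfolding F_def by auto
  have d\<Psi>: "(\<Psi> has_vector_derivative \<Psi>' u) (at u within {a..c})" if u: "u \<in> {a..c}" for u
  proof -
    have "(F has_real_derivative g u) (at u within {0..c})"
      unfolding F_def using u ac by (intro integral_has_real_derivative cont) auto
    then have "(F has_real_derivative g u) (at u within {a..c})"
      by (rule DERIV_subset) (use ac in auto)
    moreover have "0 \<le> u"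
      using u ac by simp
    ultimately have "(\<Psi> has_real_derivative \<Psi>' u) (at u within {a..c})"
      unfolding \<Psi>_def[abs_def] \<Psi>'_def
      by (intro DERIV_diff DERIV_cmult DERIV_mult' has_real_derivative_one_plus_powr)
    then show ?thesis
      by (simp add: has_real_derivative_iff_has_vector_derivative)
  qed
  have "g u * (1 + u) powr - \<gamma> \<le> \<Psi>' u" if u: "u \<in> {a..c}" for u
  proof -
    have "F u * (\<gamma> * (1 + u) powr (- \<gamma> - 1)) \<le> C * (1 + u) powr \<alpha> * (\<gamma> * (1 + u) powr (- \<gamma> - 1))"
      using F[of u] u ac assms(5) by (intro mult_right_mono) auto
    also have "\<dots> = - K * ((\<alpha> - \<gamma>) * (1 + u) powr (\<alpha> - \<gamma> - 1))"
      using u ac assms(4) by (simp add: K_def powr_add[symmetric] field_simps)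
    finally show ?thesis
      unfolding \<Psi>'_def by simp
  qed
  then have "integral {a..c} (\<lambda>u. g u * (1 + u) powr - \<gamma>) \<le> \<Psi> c - \<Psi> a"
    using fundamental_theorem_of_calculus[OF ac(2) d\<Psi>] ac cont
    by (intro has_integral_le[OF integrable_integral]
        integrable_continuous_real continuous_intros continuous_on_subset[OF cont]) auto
  also have "\<dots> \<le> C + K"
  proof -
    have "F c * (1 + c) powr - \<gamma> \<le> C * (1 + c) powr \<alpha> * (1 + c) powr - \<gamma>"
      using F[of c] ac by (intro mult_right_mono) auto
    also have "\<dots> = C * (1 + c) powr (\<alpha> - \<gamma>)"
      using ac by (simp add: powr_add[symmetric] mult.assoc)
    also have "\<dots> \<le> C"
      using mult_left_mono[OF one_plus_powr_le_1[of c "\<alpha> - \<gamma>"] C] ac assms(4) by simp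
    finally have "F c * (1 + c) powr - \<gamma> \<le> C" .
    moreover have "K * (1 + a) powr (\<alpha> - \<gamma>) \<le> K"
      using mult_left_mono[OF one_plus_powr_le_1[of a "\<alpha> - \<gamma>"] K] ac assms(4) by simp
    moreover have "0 \<le> F a * (1 + a) powr - \<gamma>" "0 \<le> K * (1 + c) powr (\<alpha> - \<gamma>)"
      using F[of a] ac K by simp_all
    ultimately show ?thesis
      unfolding \<Psi>_def by linarith
  qed
  finally show ?thesis
    unfolding K_def by (simp add: algebra_simps)
qed

section \<open>An energy estimate for the system\<close>

lemma lyapunov_derivative_bound:
  fixes f x b i1 i2 h r :: real
  assumes f: "0 \<le> f" "f \<le> 1" and x: "2 * \<bar>x\<bar> \<le> 1" and r: "0 \<le> r"
    and i2: "\<bar>i2\<bar> \<le> 1" and h: "\<bar>b + i1\<bar> \<le> h"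
  shows "\<bar>-4 * (b + i1) * f + 4 * i2 * (-4 * b * f * (1 - f) + 2 * r * x)\<bar>
           \<le> 8 * h + 4 * (\<bar>i1\<bar> * \<bar>i2\<bar>) + 4 * r * \<bar>i2\<bar>"
proof -
  have "0 \<le> (1 - 2 * f)\<^sup>2"
    by simp
  then have "4 * f * (1 - f) \<le> 1"
    by (simp add: power2_eq_square algebra_simps)
  moreover have "0 \<le> 4 * f * (1 - f)"
    using f by simp
  ultimately have "\<bar>4 * f * (1 - f)\<bar> \<le> 1"
    by simp
  then have "\<bar>b\<bar> * \<bar>4 * f * (1 - f)\<bar> \<le> \<bar>b\<bar>"
    using mult_left_mono[of _ 1 "\<bar>b\<bar>"] by simp
  moreover have "\<bar>-4 * b * f * (1 - f)\<bar> = \<bar>b\<bar> * \<bar>4 * f * (1 - f)\<bar>"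
    by (simp add: abs_mult)
  ultimately have "\<bar>-4 * b * f * (1 - f)\<bar> \<le> \<bar>b\<bar>"
    by simp
  moreover have "\<bar>2 * r * x\<bar> \<le> r"
    using mult_left_mono[OF x r] r by (simp add: abs_mult)
  ultimately have "\<bar>-4 * b * f * (1 - f) + 2 * r * x\<bar> \<le> \<bar>b\<bar> + r"
    using abs_triangle_ineq[of "-4 * b * f * (1 - f)" "2 * r * x"] by linarith
  then have "\<bar>4 * i2 * (-4 * b * f * (1 - f) + 2 * r * x)\<bar> \<le> 4 * \<bar>i2\<bar> * (\<bar>b\<bar> + r)"
    by (simp add: abs_mult mult_left_mono)
  also have "\<dots> \<le> 4 * \<bar>i2\<bar> * (h + \<bar>i1\<bar> + r)"
    using h by (intro mult_left_mono add_right_mono) auto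
  also have "\<dots> \<le> 4 * h + 4 * (\<bar>i1\<bar> * \<bar>i2\<bar>) + 4 * r * \<bar>i2\<bar>"
    using mult_right_mono[OF i2, of h] h by (simp add: algebra_simps)
  finally have second: "\<bar>4 * i2 * (-4 * b * f * (1 - f) + 2 * r * x)\<bar>
      \<le> 4 * h + 4 * (\<bar>i1\<bar> * \<bar>i2\<bar>) + 4 * r * \<bar>i2\<bar>" .
  have "\<bar>b + i1\<bar> * f \<le> h * 1"
    using h f by (intro mult_mono) auto
  moreover have "\<bar>-4 * (b + i1) * f\<bar> = 4 * (\<bar>b + i1\<bar> * f)"
    using f by (simp only: abs_mult)
  ultimately have first: "\<bar>-4 * (b + i1) * f\<bar> \<le> 4 * h"
    by simp
  show ?thesis
    using abs_triangle_ineq[of "-4 * (b + i1) * f" "4 * i2 * (-4 * b * f * (1 - f) + 2 * r * x)"]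
      first second
    by linarith
qed

lemma has_real_derivative_nonpos_imp_antimono:
  fixes g g' :: "real \<Rightarrow> real"
  assumes "a \<le> b"
    and "\<And>x. x \<in> {a..b} \<Longrightarrow> (g has_real_derivative g' x) (at x within {a..b})"
    and "\<And>x. x \<in> {a..b} \<Longrightarrow> g' x \<le> 0"
  shows "g b \<le> g a"
proof -
  obtain x where "x \<in> {a..b}" "g b - g a = g' x * (b - a)"
    using mvt_very_simple[OF assms(1), where f=g and f'="\<lambda>x. (*) (g' x)"] assms(2)
    unfolding has_field_derivative_def by auto
  moreover have "g' x * (b - a) \<le> 0"
    using assms(1) assms(3) \<open>x \<in> {a..b}\<close> by (intro mult_nonpos_nonneg) auto
  ultimately show ?thesis
    by simp
qed

lemma gronwall_vanishing:
  fixes E E' :: "real \<Rightarrow> real"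
  assumes dE: "\<And>u. u \<in> {a..c} \<Longrightarrow> (E has_real_derivative E' u) (at u within {a..c})"
    and bound: "\<And>u. u \<in> {a..c} \<Longrightarrow> \<bar>E' u\<bar> \<le> K * E u"
    and nonneg: "\<And>u. u \<in> {a..c} \<Longrightarrow> 0 \<le> E u"
    and zero: "u0 \<in> {a..c}" "E u0 = 0"
    and u: "u \<in> {a..c}"
  shows "E u = 0"
proof -
  have dE': "(E has_real_derivative E' x) (at x within {v..w})" if "x \<in> {v..w}" "{v..w} \<subseteq> {a..c}" for x v w
    using DERIV_subset[OF dE] that by blast
  have "E u \<le> 0"
  proof (cases "u0 \<le> u")
    case True
    have "exp (- K * u) * E u \<le> exp (- K * u0) * E u0"
    proof (rule has_real_derivative_nonpos_imp_antimono[where g="\<lambda>v. exp (- K * v) * E v", OF True])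
      fix x assume x: "x \<in> {u0..u}"
      then show "((\<lambda>v. exp (- K * v) * E v) has_real_derivative exp (- K * x) * (E' x - K * E x))
          (at x within {u0..u})"
        using zero u by (auto intro!: derivative_eq_intros dE' simp: algebra_simps)
      show "exp (- K * x) * (E' x - K * E x) \<le> 0"
        using bound[of x] x zero u by (intro mult_nonneg_nonpos) auto
    qed
    then show ?thesis
      using zero by (simp add: mult_le_0_iff)
  next
    case False
    have "- (exp (K * u0) * E u0) \<le> - (exp (K * u) * E u)"
    proof (rule has_real_derivative_nonpos_imp_antimono[where g="\<lambda>v. - (exp (K * v) * E v)"])
      show "u \<le> u0"
        using False by simp
    next
      fix x assume x: "x \<in> {u..u0}"
      then show "((\<lambda>v. - (exp (K * v) * E v)) has_real_derivative - (exp (K * x) * (E' x + K * E x)))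
          (at x within {u..u0})"
        using zero u by (auto intro!: derivative_eq_intros dE' simp: algebra_simps)
      show "- (exp (K * x) * (E' x + K * E x)) \<le> 0"
        using bound[of x] x zero u by (auto intro!: mult_nonneg_nonneg)
    qed
    then show ?thesis
      using zero by (simp add: mult_le_0_iff)
  qed
  with nonneg[OF u] show ?thesis
    by simp
qed

lemma ln_energy_variation:
  fixes E P X b I1 I2 h :: "real \<Rightarrow> real"
  assumes "a \<le> c" "0 \<le> r"
    and dE: "\<And>u. u \<in> {a..c} \<Longrightarrow> (E has_real_derivative -4 * b u * P u) (at u within {a..c})"
    and dP: "\<And>u. u \<in> {a..c} \<Longrightarrow>
               (P has_real_derivative -4 * b u * P u + 2 * r * X u) (at u within {a..c})"
    and dI2: "\<And>u. u \<in> {a..c} \<Longrightarrow> (I2 has_real_derivative - I1 u) (at u within {a..c})"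
    and E: "\<And>u. u \<in> {a..c} \<Longrightarrow> 0 < E u \<and> 0 \<le> P u \<and> P u \<le> E u \<and> 2 * \<bar>X u\<bar> \<le> E u"
    and I2: "\<And>u. u \<in> {a..c} \<Longrightarrow> \<bar>I2 u\<bar> \<le> 1"
    and h: "\<And>u. u \<in> {a..c} \<Longrightarrow> \<bar>b u + I1 u\<bar> \<le> h u"
    and cont: "continuous_on {a..c} h" "continuous_on {a..c} I1" "continuous_on {a..c} I2"
  shows "\<bar>ln (E c) - ln (E a)\<bar>
           \<le> 8 + integral {a..c} (\<lambda>u. 8 * h u + 4 * (\<bar>I1 u\<bar> * \<bar>I2 u\<bar>) + 4 * r * \<bar>I2 u\<bar>)"
proof -
  define f where "f u = P u / E u" for u
  \<comment> \<open>The correction cancels the leading part \<open>-4 b f \<approx> 4 I1 f\<close> of \<open>(ln E)'\<close>.\<close>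
  define G where "G u = ln (E u) + 4 * (I2 u * f u)" for u
  define D where "D u = -4 * (b u + I1 u) * f u
                          + 4 * I2 u * (-4 * b u * f u * (1 - f u) + 2 * r * (X u / E u))" for u
  define g where "g u = 8 * h u + 4 * (\<bar>I1 u\<bar> * \<bar>I2 u\<bar>) + 4 * r * \<bar>I2 u\<bar>" for u
  have f: "0 \<le> f u" "f u \<le> 1" if "u \<in> {a..c}" for u
    using E[OF that] by (auto simp: f_def field_simps)
  have dG: "(G has_vector_derivative D u) (at u within {a..c})" if u: "u \<in> {a..c}" for u
  proof -
    have Epos: "0 < E u"
      using E[OF u] by simp
    have df: "(f has_real_derivative
        ((-4 * b u * P u + 2 * r * X u) * E u - P u * (-4 * b u * P u)) / (E u * E u))
        (at u within {a..c})"
      unfolding f_def[abs_def] using DERIV_divide[OF dP[OF u] dE[OF u]] Epos by simp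
    have dln: "((\<lambda>u. ln (E u)) has_real_derivative (-4 * b u * P u) / E u) (at u within {a..c})"
      using DERIV_chain2[OF DERIV_ln_divide[OF Epos] dE[OF u]] by simp
    have "(G has_real_derivative
        (-4 * b u * P u) / E u + 4 * (I2 u *
          (((-4 * b u * P u + 2 * r * X u) * E u - P u * (-4 * b u * P u)) / (E u * E u))
          + - I1 u * f u))
        (at u within {a..c})"
      unfolding G_def[abs_def] by (intro DERIV_add DERIV_cmult DERIV_mult' dI2[OF u] df dln)
    moreover have "(-4 * b u * P u) / E u + 4 * (I2 u *
          (((-4 * b u * P u + 2 * r * X u) * E u - P u * (-4 * b u * P u)) / (E u * E u))
          + - I1 u * f u) = D u"
      using Epos by (simp add: D_def f_def field_simps)
    ultimately show ?thesis
      by (simp add: has_real_derivative_iff_has_vector_derivative)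
  qed
  have "(D has_integral G c - G a) {a..c}"
    using fundamental_theorem_of_calculus[OF assms(1) dG] by simp
  moreover have "norm (D u) \<le> g u" if u: "u \<in> {a..c}" for u
  proof -
    have "2 * \<bar>X u / E u\<bar> \<le> 1"
      using E[OF u] by (simp add: abs_divide divide_le_eq)
    then show ?thesis
      unfolding D_def g_def real_norm_def
      by (rule lyapunov_derivative_bound[OF f[OF u] _ assms(2) I2[OF u] h[OF u]])
  qed
  moreover have "g integrable_on {a..c}"
    unfolding g_def by (intro integrable_continuous_real continuous_intros cont)
  ultimately have "\<bar>G c - G a\<bar> \<le> integral {a..c} g"
    using integral_norm_bound_integral[of D "{a..c}" g]
    by (simp add: integral_unique has_integral_integrable)
  moreover have "\<bar>4 * (I2 u * f u)\<bar> \<le> 4" if "u \<in> {a..c}" for u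
  proof -
    have "\<bar>I2 u\<bar> * \<bar>f u\<bar> \<le> 1 * 1"
      using I2[OF that] f[OF that] by (intro mult_mono) auto
    then show ?thesis
      by (simp add: abs_mult)
  qed
  from this[of a] this[of c] have "\<bar>4 * (I2 a * f a)\<bar> \<le> 4" "\<bar>4 * (I2 c * f c)\<bar> \<le> 4"
    using assms(1) by auto
  ultimately show ?thesis
    unfolding G_def g_def by linarith
qed

lemma sysmat_mult_vec_nth:
  "(sysmat b r t *v w) $ 1 = - 2 * complex_of_real (b t) * w $ 1 + \<i> * complex_of_real r * w $ 2"
  "(sysmat b r t *v w) $ 2 = \<i> * complex_of_real r * w $ 1"
  by (simp_all add: sysmat_def matrix_vector_mult_def sum_2)

lemma norm_vec2_power2: "(norm (w :: complex^2))\<^sup>2 = (cmod (w $ 1))\<^sup>2 + (cmod (w $ 2))\<^sup>2"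
  by (simp add: norm_vec_def L2_set_def sum_2)

lemma two_abs_Im_mult_cnj_le: "2 * \<bar>Im (w $ 1 * cnj (w $ 2))\<bar> \<le> (norm (w :: complex^2))\<^sup>2"
proof -
  have "\<bar>Im (w $ 1 * cnj (w $ 2))\<bar> \<le> cmod (w $ 1) * cmod (w $ 2)"
    using abs_Im_le_cmod[of "w $ 1 * cnj (w $ 2)"] by (simp add: norm_mult)
  then show ?thesis
    using sum_squares_bound[of "cmod (w $ 1)" "cmod (w $ 2)"] norm_vec2_power2[of w] by linarith
qed

lemma sysmat_energy_derivatives:
  fixes W :: "real \<Rightarrow> complex^2"
  assumes "(W has_vector_derivative (sysmat b r t *v W t)) (at t within S)"
  shows "((\<lambda>u. (norm (W u))\<^sup>2) has_real_derivative -4 * b t * (cmod (W t $ 1))\<^sup>2) (at t within S)"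
    and "((\<lambda>u. (cmod (W u $ 1))\<^sup>2) has_real_derivative
           -4 * b t * (cmod (W t $ 1))\<^sup>2 + 2 * r * Im (W t $ 1 * cnj (W t $ 2))) (at t within S)"
proof -
  have Re: "((\<lambda>u. Re (W u $ i)) has_real_derivative Re ((sysmat b r t *v W t) $ i)) (at t within S)"
    and Im: "((\<lambda>u. Im (W u $ i)) has_real_derivative Im ((sysmat b r t *v W t) $ i)) (at t within S)"
    for i
    using bounded_linear.has_vector_derivative[OF bounded_linear_compose[OF bounded_linear_Re
          bounded_linear_vec_nth] assms]
      bounded_linear.has_vector_derivative[OF bounded_linear_compose[OF bounded_linear_Im
          bounded_linear_vec_nth] assms]
    by (simp_all add: has_real_derivative_iff_has_vector_derivative)
  have cmod1: "(\<lambda>u. (cmod (W u $ 1))\<^sup>2) = (\<lambda>u. (Re (W u $ 1))\<^sup>2 + (Im (W u $ 1))\<^sup>2)"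
    by (simp add: cmod_power2)
  have norm: "(\<lambda>u. (norm (W u))\<^sup>2) =
      (\<lambda>u. (Re (W u $ 1))\<^sup>2 + (Im (W u $ 1))\<^sup>2 + ((Re (W u $ 2))\<^sup>2 + (Im (W u $ 2))\<^sup>2))"
    by (simp add: norm_vec2_power2 cmod_power2)
  show "((\<lambda>u. (norm (W u))\<^sup>2) has_real_derivative -4 * b t * (cmod (W t $ 1))\<^sup>2) (at t within S)"
    unfolding norm
    by (rule Re Im derivative_eq_intros refl)+
      (simp add: sysmat_mult_vec_nth cmod_power2, simp add: algebra_simps power2_eq_square)
  show "((\<lambda>u. (cmod (W u $ 1))\<^sup>2) has_real_derivative
           -4 * b t * (cmod (W t $ 1))\<^sup>2 + 2 * r * Im (W t $ 1 * cnj (W t $ 2))) (at t within S)"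
    unfolding cmod1
    by (rule Re Im derivative_eq_intros refl)+
      (simp add: sysmat_mult_vec_nth cmod_power2, simp add: algebra_simps power2_eq_square)
qed

lemma sysmat_solution_norm_bound:
  fixes W :: "real \<Rightarrow> complex^2" and b I1 I2 h :: "real \<Rightarrow> real"
  assumes ac: "a \<le> c" and r: "0 \<le> r"
    and W: "\<And>u. u \<in> {a..c} \<Longrightarrow> (W has_vector_derivative (sysmat b r u *v W u)) (at u within {a..c})"
    and dI2: "\<And>u. u \<in> {a..c} \<Longrightarrow> (I2 has_real_derivative - I1 u) (at u within {a..c})"
    and I2: "\<And>u. u \<in> {a..c} \<Longrightarrow> \<bar>I2 u\<bar> \<le> 1"
    and h: "\<And>u. u \<in> {a..c} \<Longrightarrow> \<bar>b u + I1 u\<bar> \<le> h u"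
    and cont: "continuous_on {a..c} h" "continuous_on {a..c} I1" "continuous_on {a..c} I2"
  defines "L \<equiv> 8 + integral {a..c} (\<lambda>u. 8 * h u + 4 * (\<bar>I1 u\<bar> * \<bar>I2 u\<bar>) + 4 * r * \<bar>I2 u\<bar>)"
  shows "norm (W c) \<le> exp (L / 2) * norm (W a) \<and> norm (W a) \<le> exp (L / 2) * norm (W c)"
proof -
  define E where "E u = (norm (W u))\<^sup>2" for u
  define P where "P u = (cmod (W u $ 1))\<^sup>2" for u
  have dE: "(E has_real_derivative -4 * b u * P u) (at u within {a..c})" if "u \<in> {a..c}" for u
    unfolding E_def[abs_def] P_def using sysmat_energy_derivatives(1)[OF W[OF that]] .
  have P_le_E: "P u \<le> E u" for u
    unfolding E_def P_def by (simp add: norm_vec2_power2)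
  have "E c \<le> exp L * E a \<and> E a \<le> exp L * E c"
  proof (cases "\<forall>u\<in>{a..c}. 0 < E u")
    case True
    have "\<bar>ln (E c) - ln (E a)\<bar> \<le> L"
      unfolding L_def
    proof (rule ln_energy_variation[OF ac r dE _ dI2 _ I2 h cont])
      fix u assume u: "u \<in> {a..c}"
      show "(P has_real_derivative -4 * b u * P u + 2 * r * Im (W u $ 1 * cnj (W u $ 2)))
          (at u within {a..c})"
        unfolding P_def[abs_def] using sysmat_energy_derivatives(2)[OF W[OF u]] .
      show "0 < E u \<and> 0 \<le> P u \<and> P u \<le> E u \<and> 2 * \<bar>Im (W u $ 1 * cnj (W u $ 2))\<bar> \<le> E u"
        using True u P_le_E two_abs_Im_mult_cnj_le by (auto simp: P_def E_def)
    qed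
    moreover have pos: "0 < E a" "0 < E c"
      using True ac by auto
    ultimately have "ln (E c) \<le> ln (exp L * E a)" "ln (E a) \<le> ln (exp L * E c)"
      by (simp_all add: ln_mult abs_le_iff)
    then show ?thesis
      using pos by simp
  next
    case False
    then obtain u0 where u0: "u0 \<in> {a..c}" "E u0 = 0"
      by (auto simp: E_def)
    have "continuous_on {a..c} (\<lambda>u. h u + \<bar>I1 u\<bar>)"
      using cont by (intro continuous_intros)
    then obtain B where B: "\<And>u. u \<in> {a..c} \<Longrightarrow> norm (h u + \<bar>I1 u\<bar>) \<le> B"
      using continuous_on_compact_bound[OF compact_Icc] by blast
    have "\<bar>-4 * b u * P u\<bar> \<le> (4 * B) * E u" if u: "u \<in> {a..c}" for u
    proof -
      have "\<bar>b u\<bar> \<le> B"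
        using h[OF u] B[OF u] by auto
      then have "\<bar>b u\<bar> * P u \<le> B * E u"
        using P_le_E[of u] by (intro mult_mono) (auto simp: P_def)
      then show ?thesis
        by (simp add: abs_mult P_def)
    qed
    then have "E u = 0" if "u \<in> {a..c}" for u
      using gronwall_vanishing[OF dE _ _ u0 that] by (auto simp: E_def)
    then show ?thesis
      using ac by auto
  qed
  moreover have "norm (W x) \<le> exp (L / 2) * norm (W y)" if "E x \<le> exp L * E y" for x y
  proof (rule power2_le_imp_le)
    have "exp L = (exp (L / 2))\<^sup>2"
      by (simp add: power2_eq_square exp_add[symmetric])
    then show "(norm (W x))\<^sup>2 \<le> (exp (L / 2) * norm (W y))\<^sup>2"
      using that unfolding E_def by (simp add: power_mult_distrib)
  qed simp
  ultimately show ?thesis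
    by blast
qed

section \<open>The damping coefficient\<close>

lemma two_mult_le_eps_squares:
  fixes x y \<epsilon> :: real
  assumes "0 < \<epsilon>"
  shows "2 * \<bar>x\<bar> * y \<le> \<epsilon> * x\<^sup>2 + y\<^sup>2 / \<epsilon>"
proof -
  have "0 \<le> (\<epsilon> * \<bar>x\<bar> - y)\<^sup>2 / \<epsilon>"
    using assms by simp
  also have "\<dots> = \<epsilon> * x\<^sup>2 - 2 * \<bar>x\<bar> * y + y\<^sup>2 / \<epsilon>"
    using assms by (simp add: power2_eq_square field_simps)
  finally show ?thesis
    by simp
qed

locale standing_setting =
  fixes M :: "real \<Rightarrow> real" and \<alpha> \<beta> \<gamma> T :: real
  assumes standing: "standing_assumptions M \<alpha> \<beta> \<gamma>"
    and admissible: "admissible_T M T"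
begin

abbreviation "I1 \<equiv> tail M"
abbreviation "I2 \<equiv> tail I1"
abbreviation "J \<equiv> tail (\<lambda>s. (I1 s)\<^sup>2)"
abbreviation \<epsilon> :: real where "\<epsilon> \<equiv> 1 / 36"

lemma T_pos: "0 < T"
  using admissible unfolding admissible_T_def by simp

lemma standing_unfolded:
  "continuous_on {0..} M \<and> \<beta> < 1 \<and> 0 < \<gamma> \<and> (\<alpha> \<noteq> 0 \<longrightarrow> \<gamma> \<ge> \<beta> \<and> \<beta> \<ge> (\<alpha> + 1) / 2) \<and>
   (\<forall>t\<ge>0. has_tail M t \<and> has_tail I1 t) \<and>
   (\<alpha> \<ge> 0 \<longrightarrow> (\<exists>C. \<forall>t\<ge>0. integral {0..t} (\<lambda>s. \<bar>I2 s\<bar>) \<le> C * (1 + t) powr \<alpha>)) \<and>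
   (\<alpha> \<le> 0 \<longrightarrow> (\<exists>C. \<forall>t\<ge>0. has_tail (\<lambda>s. \<bar>I2 s\<bar>) t \<and>
                             tail (\<lambda>s. \<bar>I2 s\<bar>) t \<le> C * (1 + t) powr \<alpha>)) \<and>
   (\<exists>C. \<forall>t\<ge>0. \<bar>I1 t\<bar> \<le> C * (1 + t) powr (- \<gamma>)) \<and>
   (\<exists>C. \<forall>t\<ge>0. has_tail (\<lambda>s. (I1 s)\<^sup>2) t \<and> J t \<le> C * (1 + t) powr (- \<gamma>)) \<and>
   (\<exists>C. \<forall>t\<ge>0. has_tail J t \<and> (1 + t) powr \<alpha> * tail J t \<le> C)"
  using standing unfolding standing_assumptions_def Let_def
  by (elim conjE) (intro conjI; assumption)

lemma continuous_on_M: "continuous_on {0..b} M"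
  using standing_unfolded continuous_on_subset[of "{0..}" M "{0..b}"] by auto

lemma has_tail_M: "0 \<le> t \<Longrightarrow> has_tail M t"
  and has_tail_I1: "0 \<le> t \<Longrightarrow> has_tail I1 t"
  and has_tail_I1_sq: "0 \<le> t \<Longrightarrow> has_tail (\<lambda>s. (I1 s)\<^sup>2) t"
  and has_tail_J: "0 \<le> t \<Longrightarrow> has_tail J t"
  using standing_unfolded by blast+

lemma alpha_less_gamma: "0 < \<alpha> \<Longrightarrow> \<alpha> < \<gamma>"
  and gamma_pos: "0 < \<gamma>"
  using standing_unfolded by auto

lemma I1_decay:
  obtains C where "0 \<le> C" "\<And>t. 0 \<le> t \<Longrightarrow> \<bar>I1 t\<bar> \<le> C * (1 + t) powr - \<gamma>"
proof -
  obtain C where C: "\<forall>t\<ge>0. \<bar>I1 t\<bar> \<le> C * (1 + t) powr - \<gamma>"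
    using standing_unfolded by blast
  moreover from this have "0 \<le> C"
    using abs_ge_zero[of "I1 0"] by auto
  ultimately show ?thesis
    using that by blast
qed

lemma continuous_on_I1: "0 \<le> a \<Longrightarrow> continuous_on {a..b} I1"
  by (rule continuous_on_tail[OF has_tail_M continuous_on_subset[OF continuous_on_M]]) auto

lemma continuous_on_I2: "0 \<le> a \<Longrightarrow> continuous_on {a..b} I2"
  by (rule continuous_on_tail[OF has_tail_I1 continuous_on_I1])

lemma continuous_on_J: "0 \<le> a \<Longrightarrow> continuous_on {a..b} J"
  by (rule continuous_on_tail[OF has_tail_I1_sq]) (auto intro: continuous_intros continuous_on_I1)

lemma J_nonneg: "0 \<le> t \<Longrightarrow> 0 \<le> J t"
  by (rule tail_nonneg[OF has_tail_I1_sq]) auto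

lemma J_antimono: "0 \<le> t \<Longrightarrow> t \<le> s \<Longrightarrow> J s \<le> J t"
  by (rule tail_antimono[OF has_tail_I1_sq]) auto

lemma Qk_1: "Qk M 1 = (\<lambda>s. - I1 s)"
  by (simp add: fun_eq_iff)

lemma Qk_2: "Qk M 2 = (\<lambda>s. - J s)"
  by (simp add: fun_eq_iff numeral_2_eq_2 power2_eq_square)

lemma abs_I2_le_1:
  assumes "T \<le> t"
  shows "\<bar>I2 t\<bar> \<le> 1"
proof -
  have "tail (Qk M 1) t = - I2 t"
    unfolding Qk_1 using tail_uminus[OF has_tail_I1] T_pos assms by simp
  moreover have "\<bar>tail (Qk M 1) t\<bar> \<le> 1"
    using admissible assms unfolding admissible_T_def by blast
  ultimately show ?thesis
    by simp
qed

lemma tail_J_le: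
  assumes "T \<le> t"
  shows "tail J t \<le> \<epsilon>\<^sup>2"
proof -
  have "phi M t = tail J t"
    unfolding phi_def Qk_2 using tail_uminus[OF has_tail_J] T_pos assms by simp
  moreover have "phi M t \<le> 6 powr - 4"
    using admissible assms unfolding admissible_T_def by blast
  ultimately show ?thesis
    by (simp add: powr_minus powr_realpow power2_eq_square)
qed

lemma
  assumes "T \<le> t"
  shows has_tail_J_sq: "has_tail (\<lambda>s. (J s)\<^sup>2) t"
    and tail_J_sq_le: "tail (\<lambda>s. (J s)\<^sup>2) t \<le> \<epsilon>\<^sup>2 * J t"
proof -
  have t: "0 \<le> t"
    using assms T_pos by simp
  note majorant = has_tail_lincomb[OF has_tail_J has_tail_J, OF t t, of "J t" 0]
    tail_lincomb[OF has_tail_J has_tail_J, OF t t, of "J t" 0]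
  have dom: "\<bar>(J s)\<^sup>2\<bar> \<le> J t * J s + 0 * J s" if "t \<le> s" for s
    using J_antimono[OF t that] J_nonneg[of s] t that
    by (simp add: power2_eq_square mult_right_mono)
  show "has_tail (\<lambda>s. (J s)\<^sup>2) t"
    using continuous_on_J t
    by (intro has_tail_dominated[OF _ dom majorant(1)] integrable_continuous_real continuous_intros)
  then have "tail (\<lambda>s. (J s)\<^sup>2) t \<le> J t * tail J t"
    using tail_abs_le[OF _ majorant(1) dom] majorant(2) by simp
  also have "\<dots> \<le> J t * \<epsilon>\<^sup>2"
    using tail_J_le[OF assms] J_nonneg[OF t] by (intro mult_left_mono)
  finally show "tail (\<lambda>s. (J s)\<^sup>2) t \<le> \<epsilon>\<^sup>2 * J t"
    by (simp add: mult.commute)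
qed

lemma
  assumes t: "T \<le> t" and AB: "0 \<le> A" "0 \<le> B"
    and cont: "\<And>b. continuous_on {T..b} q"
    and bound: "\<And>s. T \<le> s \<Longrightarrow> \<bar>q s\<bar> \<le> 2 * A * \<bar>I1 s\<bar> * J s + B * (J s)\<^sup>2"
  shows has_tail_quadratic_majorant: "has_tail q t"
    and tail_quadratic_majorant_le: "\<bar>tail q t\<bar> \<le> (2 * \<epsilon> * A + \<epsilon>\<^sup>2 * B) * J t"
proof -
  have t0: "0 \<le> t"
    using t T_pos by simp
  note majorant = has_tail_lincomb[OF has_tail_I1_sq[OF t0] has_tail_J_sq[OF t], of "A * \<epsilon>" "A / \<epsilon> + B"]
    tail_lincomb[OF has_tail_I1_sq[OF t0] has_tail_J_sq[OF t], of "A * \<epsilon>" "A / \<epsilon> + B"]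
  have dom: "\<bar>q s\<bar> \<le> A * \<epsilon> * (I1 s)\<^sup>2 + (A / \<epsilon> + B) * (J s)\<^sup>2" if "t \<le> s" for s
  proof -
    have "2 * A * \<bar>I1 s\<bar> * J s \<le> A * (\<epsilon> * (I1 s)\<^sup>2 + (J s)\<^sup>2 / \<epsilon>)"
      using mult_left_mono[OF two_mult_le_eps_squares[of \<epsilon> "I1 s" "J s"] AB(1)] by (simp add: mult_ac)
    then show ?thesis
      using bound[of s] that t by (simp add: algebra_simps)
  qed
  show "has_tail q t"
    using cont t
    by (intro has_tail_dominated[OF _ dom majorant(1)] integrable_continuous_real
        continuous_on_subset[OF cont]) auto
  then have "\<bar>tail q t\<bar> \<le> A * \<epsilon> * J t + (A / \<epsilon> + B) * tail (\<lambda>s. (J s)\<^sup>2) t"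
    using tail_abs_le[OF _ majorant(1) dom] majorant(2) by simp
  also have "\<dots> \<le> A * \<epsilon> * J t + (A / \<epsilon> + B) * (\<epsilon>\<^sup>2 * J t)"
    using tail_J_sq_le[OF t] AB by (intro add_left_mono mult_left_mono) auto
  also have "\<dots> = (2 * \<epsilon> * A + \<epsilon>\<^sup>2 * B) * J t"
    by (simp add: power2_eq_square field_simps)
  finally show "\<bar>tail q t\<bar> \<le> (2 * \<epsilon> * A + \<epsilon>\<^sup>2 * B) * J t" .
qed

lemma Qk_continuous_bound:
  "(\<forall>b. continuous_on {T..b} (Qk M k)) \<and>
   (2 \<le> k \<longrightarrow> (\<forall>s\<ge>T. \<bar>Qk M k s\<bar> \<le> majorant \<epsilon> (k - 2) * J s))"
proof (induction k rule: less_induct)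
  case (less k)
  have T0: "0 \<le> T"
    using T_pos by simp
  consider "k = 0" | "k = 1" | "k = 2" | m where "k = Suc (Suc (Suc m))"
    by (metis One_nat_def Suc_1 not0_implies_Suc)
  then show ?case
  proof cases
    case 1
    have "Qk M 0 = (\<lambda>_. 0)"
      by (simp add: fun_eq_iff)
    then show ?thesis
      using 1 by simp
  next
    case 2
    show ?thesis
      unfolding 2 Qk_1 using continuous_on_I1[OF T0] by (auto intro: continuous_intros)
  next
    case 3
    show ?thesis
      unfolding 3 Qk_2 using continuous_on_J[OF T0] J_nonneg T0
      by (auto intro: continuous_intros)
  next
    case 4
    let ?c = "majorant \<epsilon>"
    define q where "q s = (\<Sum>j\<in>{1..Suc (Suc m)}. Qk M j s * Qk M (Suc (Suc (Suc m)) - j) s)" for s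
    define S where "S = (\<Sum>i<m. ?c i * ?c (m - 1 - i))"
    have Qk_eq: "Qk M k = (\<lambda>t. - tail q t)"
      unfolding 4 q_def by (simp add: fun_eq_iff)
    have cont_q: "continuous_on {T..b} q" for b
      unfolding q_def using less.IH 4
      by (intro continuous_on_sum continuous_on_mult) auto
    have bound: "\<bar>q s\<bar> \<le> 2 * ?c m * \<bar>I1 s\<bar> * J s + S * (J s)\<^sup>2" if s: "T \<le> s" for s
    proof -
      have "\<bar>Qk M j s\<bar> \<le> ?c (j - 2) * J s" if "2 \<le> j" "j \<le> Suc (Suc m)" for j
        using less.IH[of j] that s 4 by auto
      from abs_convolution_le[of m "\<lambda>j. Qk M j s", OF this]
      show ?thesis
        unfolding q_def S_def Qk_1 by (simp add: mult_ac)
    qed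
    have S: "0 \<le> S"
      unfolding S_def by (intro sum_nonneg mult_nonneg_nonneg majorant_nonneg) auto
    note majorant_Suc = majorant.simps(2)[of \<epsilon> m, folded S_def]
    have has_tail_q: "has_tail q t" if "T \<le> t" for t
      by (rule has_tail_quadratic_majorant[OF that majorant_nonneg S cont_q bound]) auto
    have tail_q: "\<bar>tail q t\<bar> \<le> ?c (k - 2) * J t" if "T \<le> t" for t
      using tail_quadratic_majorant_le[OF that majorant_nonneg S cont_q bound] majorant_Suc 4
      by simp
    show ?thesis
      unfolding Qk_eq
      using continuous_on_tail[OF has_tail_q[OF order_refl] cont_q] tail_q
      by (auto intro: continuous_intros)
  qed
qed

lemma abs_bcoef_plus_I1_le:
  assumes s: "T \<le> s"
  shows "\<bar>bcoef M s + I1 s\<bar> \<le> 2 * J s"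
proof -
  let ?c = "majorant \<epsilon>"
  define f where "f k = Qk M (Suc k) s" for k
  have \<epsilon>: "0 \<le> \<epsilon>" "(1 + 2 * \<epsilon>)\<^sup>2 \<le> 2"
    by (simp_all add: power2_eq_square)
  have f_le: "norm (f (Suc n)) \<le> ?c n * J s" for n
    unfolding f_def using Qk_continuous_bound[of "Suc (Suc n)"] s by simp
  have summable_c: "summable (\<lambda>n. ?c n * J s)"
    by (intro summable_mult2 summable_majorant \<epsilon>)
  have summable_f: "summable (\<lambda>n. f (Suc n))"
    by (rule summable_comparison_test'[OF summable_c f_le])
  have "bcoef M s + I1 s = (\<Sum>n. f (Suc n))"
    using suminf_split_head[OF summable_f[unfolded summable_Suc_iff]]
    unfolding bcoef_def f_def by simp
  also have "\<bar>\<dots>\<bar> \<le> (\<Sum>n. ?c n * J s)"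
    using f_le summable_f summable_c suminf_minus[OF summable_f]
      suminf_le[of "\<lambda>n. f (Suc n)"] suminf_le[of "\<lambda>n. - f (Suc n)"]
    by (auto simp: abs_le_iff summable_minus)
  also have "\<dots> = suminf ?c * J s"
    using suminf_mult2[OF summable_majorant[OF \<epsilon>]] by simp
  also have "\<dots> \<le> 2 * J s"
    using suminf_majorant_le[OF \<epsilon>] J_nonneg s T_pos by (intro mult_right_mono) auto
  finally show ?thesis .
qed

lemma integral_abs_I2_growth:
  assumes "0 \<le> \<alpha>"
  obtains C where "0 \<le> C" "\<And>t. 0 \<le> t \<Longrightarrow> integral {0..t} (\<lambda>u. \<bar>I2 u\<bar>) \<le> C * (1 + t) powr \<alpha>"
proof -
  obtain C where C: "\<forall>t\<ge>0. integral {0..t} (\<lambda>u. \<bar>I2 u\<bar>) \<le> C * (1 + t) powr \<alpha>"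
    using standing_unfolded assms by blast
  moreover from this have "0 \<le> C"
    by (auto dest: spec[of _ 0])
  ultimately show ?thesis
    using that by blast
qed

lemma integral_abs_I2_decay:
  assumes "\<alpha> \<le> 0"
  obtains C where "0 \<le> C"
    "\<And>a c. 0 \<le> a \<Longrightarrow> a \<le> c \<Longrightarrow> integral {a..c} (\<lambda>u. \<bar>I2 u\<bar>) \<le> C * (1 + a) powr \<alpha>"
proof -
  obtain C where C: "\<forall>t\<ge>0. has_tail (\<lambda>u. \<bar>I2 u\<bar>) t \<and> tail (\<lambda>u. \<bar>I2 u\<bar>) t \<le> C * (1 + t) powr \<alpha>"
    using standing_unfolded assms by blast
  have "0 \<le> C"
    using C tail_nonneg[of "\<lambda>u. \<bar>I2 u\<bar>" 0] by auto
  moreover have "integral {a..c} (\<lambda>u. \<bar>I2 u\<bar>) \<le> C * (1 + a) powr \<alpha>" if "0 \<le> a" "a \<le> c" for a c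
    using C integral_le_tail[of "\<lambda>u. \<bar>I2 u\<bar>" a c] that by force
  ultimately show ?thesis
    using that by blast
qed

lemma integral_I1_I2_bounded:
  obtains K where "\<And>a c. 0 \<le> a \<Longrightarrow> a \<le> c \<Longrightarrow> integral {a..c} (\<lambda>u. \<bar>I1 u\<bar> * \<bar>I2 u\<bar>) \<le> K"
proof -
  obtain C1 where C1: "0 \<le> C1" "\<And>t. 0 \<le> t \<Longrightarrow> \<bar>I1 t\<bar> \<le> C1 * (1 + t) powr - \<gamma>"
    using I1_decay by blast
  have int: "(\<lambda>u. f u * \<bar>I2 u\<bar>) integrable_on {a..c}" if "0 \<le> a" "continuous_on {a..c} f" for f a c
    using that continuous_on_I2 by (intro integrable_continuous_real continuous_intros)
  show ?thesis
  proof (cases "0 < \<alpha>")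
    case True
    obtain C2 where C2: "\<And>t. 0 \<le> t \<Longrightarrow> integral {0..t} (\<lambda>u. \<bar>I2 u\<bar>) \<le> C2 * (1 + t) powr \<alpha>"
      using integral_abs_I2_growth True by auto
    have "integral {a..c} (\<lambda>u. \<bar>I1 u\<bar> * \<bar>I2 u\<bar>) \<le> C1 * (C2 * (1 + \<gamma> / (\<gamma> - \<alpha>)))"
      if ac: "0 \<le> a" "a \<le> c" for a c
    proof -
      have "continuous_on {a..c} (\<lambda>u. C1 * (1 + u) powr - \<gamma>)"
        using ac by (intro continuous_intros) auto
      moreover have "\<bar>I1 u\<bar> * \<bar>I2 u\<bar> \<le> C1 * (1 + u) powr - \<gamma> * \<bar>I2 u\<bar>" if "u \<in> {a..c}" for u
        using mult_right_mono[OF C1(2) abs_ge_zero, of u "I2 u"] that ac by simp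
      ultimately have "integral {a..c} (\<lambda>u. \<bar>I1 u\<bar> * \<bar>I2 u\<bar>)
          \<le> integral {a..c} (\<lambda>u. C1 * (1 + u) powr - \<gamma> * \<bar>I2 u\<bar>)"
        using ac continuous_on_I1 by (intro integral_le int) (auto intro: continuous_intros)
      also have "\<dots> = C1 * integral {a..c} (\<lambda>u. \<bar>I2 u\<bar> * (1 + u) powr - \<gamma>)"
        by (simp add: mult_ac)
      also have "\<dots> \<le> C1 * (C2 * (1 + \<gamma> / (\<gamma> - \<alpha>)))"
        using integral_mult_powr_le[of "\<lambda>u. \<bar>I2 u\<bar>", OF _ _ C2 alpha_less_gamma[OF True] gamma_pos ac]
          continuous_on_I2 C1(1)
        by (auto intro!: mult_left_mono continuous_intros)
      finally show ?thesis .
    qed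
    then show ?thesis
      using that by blast
  next
    case False
    then have "\<alpha> \<le> 0"
      by simp
    then obtain C2 where C2: "0 \<le> C2"
      "\<And>a c. 0 \<le> a \<Longrightarrow> a \<le> c \<Longrightarrow> integral {a..c} (\<lambda>u. \<bar>I2 u\<bar>) \<le> C2 * (1 + a) powr \<alpha>"
      using integral_abs_I2_decay by blast
    have "integral {a..c} (\<lambda>u. \<bar>I1 u\<bar> * \<bar>I2 u\<bar>) \<le> C1 * C2"
      if ac: "0 \<le> a" "a \<le> c" for a c
    proof -
      have "\<bar>I1 u\<bar> \<le> C1" if "0 \<le> u" for u
        using C1(2)[OF that] mult_left_mono[OF one_plus_powr_le_1[OF that, of "- \<gamma>"] C1(1)] gamma_pos
        by simp
      then have "integral {a..c} (\<lambda>u. \<bar>I1 u\<bar> * \<bar>I2 u\<bar>) \<le> integral {a..c} (\<lambda>u. C1 * \<bar>I2 u\<bar>)"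
        using ac continuous_on_I1 by (intro integral_le int) (auto intro!: continuous_intros mult_right_mono)
      also have "\<dots> \<le> C1 * (C2 * (1 + a) powr \<alpha>)"
        using C2(2)[OF ac] C1(1) by (simp add: mult_left_mono)
      also have "\<dots> \<le> C1 * C2"
        using mult_left_mono[OF one_plus_powr_le_1[of a \<alpha>] C2(1)] C1(1) ac \<open>\<alpha> \<le> 0\<close>
        by (simp add: mult_left_mono)
      finally show ?thesis .
    qed
    then show ?thesis
      using that by blast
  qed
qed

lemma solution_norm_equivalence:
  obtains K where "\<And>W r a c.
    (\<And>t. T \<le> t \<Longrightarrow> (W has_vector_derivative (sysmat (bcoef M) r t *v W t)) (at t within {T..})) \<Longrightarrow>
    0 \<le> r \<Longrightarrow> T \<le> a \<Longrightarrow> a \<le> c \<Longrightarrow>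
    norm (W c) \<le> exp (K + 2 * r * integral {a..c} (\<lambda>u. \<bar>I2 u\<bar>)) * norm (W a) \<and>
    norm (W a) \<le> exp (K + 2 * r * integral {a..c} (\<lambda>u. \<bar>I2 u\<bar>)) * norm (W c)"
proof -
  obtain K0 where K0: "\<And>a c. 0 \<le> a \<Longrightarrow> a \<le> c \<Longrightarrow> integral {a..c} (\<lambda>u. \<bar>I1 u\<bar> * \<bar>I2 u\<bar>) \<le> K0"
    using integral_I1_I2_bounded by blast
  have "norm (W c) \<le> exp (12 + 2 * K0 + 2 * r * integral {a..c} (\<lambda>u. \<bar>I2 u\<bar>)) * norm (W a) \<and>
      norm (W a) \<le> exp (12 + 2 * K0 + 2 * r * integral {a..c} (\<lambda>u. \<bar>I2 u\<bar>)) * norm (W c)"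
    if W: "\<And>t. T \<le> t \<Longrightarrow> (W has_vector_derivative (sysmat (bcoef M) r t *v W t)) (at t within {T..})"
      and r: "0 \<le> r" and a: "T \<le> a" and ac: "a \<le> c" for W :: "real \<Rightarrow> complex^2" and r a c
  proof -
    have a0: "0 \<le> a"
      using a T_pos by simp
    define L where "L = 8 + integral {a..c} (\<lambda>u. 8 * (2 * J u) + 4 * (\<bar>I1 u\<bar> * \<bar>I2 u\<bar>) + 4 * r * \<bar>I2 u\<bar>)"
    have "norm (W c) \<le> exp (L / 2) * norm (W a) \<and> norm (W a) \<le> exp (L / 2) * norm (W c)"
      unfolding L_def
    proof (rule sysmat_solution_norm_bound[OF ac r])
      fix u assume u: "u \<in> {a..c}"
      show "(W has_vector_derivative (sysmat (bcoef M) r u *v W u)) (at u within {a..c})"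
        using W[of u] u a by (auto intro: has_vector_derivative_within_subset)
      show "(I2 has_real_derivative - I1 u) (at u within {a..c})"
        by (rule has_real_derivative_tail[OF has_tail_I1[OF a0] continuous_on_I1[OF a0] u])
      show "\<bar>I2 u\<bar> \<le> 1" "\<bar>bcoef M u + I1 u\<bar> \<le> 2 * J u"
        using u a by (auto intro: abs_I2_le_1 abs_bcoef_plus_I1_le)
    qed (use a0 in \<open>auto intro: continuous_intros continuous_on_J continuous_on_I1 continuous_on_I2\<close>)
    moreover have "L \<le> 24 + 4 * K0 + 4 * r * integral {a..c} (\<lambda>u. \<bar>I2 u\<bar>)"
    proof -
      have "((\<lambda>u. 8 * (2 * J u) + 4 * (\<bar>I1 u\<bar> * \<bar>I2 u\<bar>) + 4 * r * \<bar>I2 u\<bar>) has_integral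
          8 * (2 * integral {a..c} J) + 4 * integral {a..c} (\<lambda>u. \<bar>I1 u\<bar> * \<bar>I2 u\<bar>)
            + 4 * r * integral {a..c} (\<lambda>u. \<bar>I2 u\<bar>)) {a..c}"
        using a0 by (intro has_integral_add has_integral_mult_right integrable_integral
            integrable_continuous_real continuous_intros continuous_on_J continuous_on_I1 continuous_on_I2)
      moreover have "integral {a..c} J \<le> 1"
        using integral_le_tail[OF has_tail_J[OF a0] J_nonneg ac] tail_J_le[OF a] a0
        by (simp add: power2_eq_square)
      ultimately show ?thesis
        using K0[OF a0 ac] unfolding L_def by (simp add: integral_unique)
    qed
    then have "exp (L / 2) \<le> exp (12 + 2 * K0 + 2 * r * integral {a..c} (\<lambda>u. \<bar>I2 u\<bar>))"
      by simp
    ultimately show ?thesis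
      by (meson mult_right_mono norm_ge_zero order_trans)
  qed
  then show ?thesis
    by (rule that)
qed

end

section \<open>The zone\<close>

definition zone_start :: "real \<Rightarrow> real \<Rightarrow> real \<Rightarrow> 'n::real_normed_vector \<Rightarrow> real" where
  "zone_start \<alpha> T N \<xi> = (if 0 < \<alpha> then T else t_xi \<alpha> T N \<xi>)"

lemma zone_start_bounds:
  fixes \<xi> :: "'n::real_normed_vector"
  assumes T: "0 < T" and N: "0 < N" and \<xi>: "\<xi> \<noteq> 0" and zone: "in_Zpsi \<alpha> T N t \<xi>"
  shows "T \<le> zone_start \<alpha> T N \<xi>" "zone_start \<alpha> T N \<xi> \<le> t"
    and "\<alpha> \<le> 0 \<Longrightarrow> norm \<xi> * (1 + zone_start \<alpha> T N \<xi>) powr \<alpha> \<le> N"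
proof -
  have t: "T \<le> t" and zone_t: "(1 + t) powr \<alpha> * norm \<xi> \<le> N" and r: "0 < norm \<xi>"
    using zone \<xi> unfolding in_Zpsi_def by auto
  consider "0 < \<alpha>" | "\<alpha> = 0" | "\<alpha> < 0"
    by linarith
  then have "T \<le> zone_start \<alpha> T N \<xi> \<and> zone_start \<alpha> T N \<xi> \<le> t \<and>
      (\<alpha> \<le> 0 \<longrightarrow> norm \<xi> * (1 + zone_start \<alpha> T N \<xi>) powr \<alpha> \<le> N)"
  proof cases
    case 1
    then show ?thesis
      using t by (simp add: zone_start_def)
  next
    case 2
    then show ?thesis
      using t T zone_t by (simp add: zone_start_def t_xi_def)
  next
    case 3
    define a where "a = (N / norm \<xi>) powr (1 / \<alpha>) - 1"
    have "zone_start \<alpha> T N \<xi> = max T a"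
      using 3 by (simp add: zone_start_def t_xi_def a_def)
    moreover have "a \<le> t"
    proof -
      have "(N / norm \<xi>) powr (1 / \<alpha>) \<le> ((1 + t) powr \<alpha>) powr (1 / \<alpha>)"
        using 3 zone_t r t T by (intro powr_mono2') (auto simp: field_simps)
      also have "\<dots> = 1 + t"
        using 3 t T by (simp add: powr_powr)
      finally show ?thesis
        unfolding a_def by simp
    qed
    moreover have "norm \<xi> * (1 + max T a) powr \<alpha> \<le> N"
    proof -
      have "(1 + max T a) powr \<alpha> \<le> ((N / norm \<xi>) powr (1 / \<alpha>)) powr \<alpha>"
        using 3 N r by (intro powr_mono2') (auto simp: a_def)
      also have "\<dots> = N / norm \<xi>"
        using 3 N r by (simp add: powr_powr)
      finally show ?thesis
        using r by (simp add: field_simps)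
    qed
    ultimately show ?thesis
      using t by simp
  qed
  then show "T \<le> zone_start \<alpha> T N \<xi>" "zone_start \<alpha> T N \<xi> \<le> t"
    and "\<alpha> \<le> 0 \<Longrightarrow> norm \<xi> * (1 + zone_start \<alpha> T N \<xi>) powr \<alpha> \<le> N"
    by simp_all
qed

context standing_setting
begin

lemma zone_integral_abs_I2_bound:
  assumes N: "0 < N"
  obtains C where "\<And>t (\<xi> :: 'n::real_normed_vector). in_Zpsi \<alpha> T N t \<xi> \<Longrightarrow> \<xi> \<noteq> 0 \<Longrightarrow>
    norm \<xi> * integral {zone_start \<alpha> T N \<xi>..t} (\<lambda>u. \<bar>I2 u\<bar>) \<le> C"
proof (cases "0 < \<alpha>")
  case True
  then obtain C where C: "0 \<le> C"
    "\<And>t. 0 \<le> t \<Longrightarrow> integral {0..t} (\<lambda>u. \<bar>I2 u\<bar>) \<le> C * (1 + t) powr \<alpha>"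
    using integral_abs_I2_growth by (metis less_imp_le)
  have "norm \<xi> * integral {zone_start \<alpha> T N \<xi>..t} (\<lambda>u. \<bar>I2 u\<bar>) \<le> C * N"
    if zone: "in_Zpsi \<alpha> T N t \<xi>" for t and \<xi> :: 'n
  proof -
    have t: "T \<le> t" and zone_t: "(1 + t) powr \<alpha> * norm \<xi> \<le> N"
      using zone unfolding in_Zpsi_def by auto
    have "integral {T..t} (\<lambda>u. \<bar>I2 u\<bar>) \<le> integral {0..t} (\<lambda>u. \<bar>I2 u\<bar>)"
      using T_pos t continuous_on_I2
      by (intro integral_subset_le integrable_continuous_real continuous_intros) auto
    then have "norm \<xi> * integral {T..t} (\<lambda>u. \<bar>I2 u\<bar>) \<le> norm \<xi> * (C * (1 + t) powr \<alpha>)"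
      using C(2)[of t] t T_pos by (intro mult_left_mono) auto
    also have "\<dots> \<le> C * N"
      using mult_left_mono[OF zone_t C(1)] by (simp add: mult_ac)
    finally show ?thesis
      using True by (simp add: zone_start_def)
  qed
  then show ?thesis
    using that by blast
next
  case False
  then obtain C where C: "0 \<le> C"
    "\<And>a c. 0 \<le> a \<Longrightarrow> a \<le> c \<Longrightarrow> integral {a..c} (\<lambda>u. \<bar>I2 u\<bar>) \<le> C * (1 + a) powr \<alpha>"
    using integral_abs_I2_decay by (metis not_less)
  have "norm \<xi> * integral {zone_start \<alpha> T N \<xi>..t} (\<lambda>u. \<bar>I2 u\<bar>) \<le> C * N"
    if "in_Zpsi \<alpha> T N t \<xi>" "\<xi> \<noteq> 0" for t and \<xi> :: 'n
  proof -
    note start = zone_start_bounds[OF T_pos N that(2,1)]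
    have "norm \<xi> * integral {zone_start \<alpha> T N \<xi>..t} (\<lambda>u. \<bar>I2 u\<bar>)
        \<le> norm \<xi> * (C * (1 + zone_start \<alpha> T N \<xi>) powr \<alpha>)"
      using C(2) start(1,2) T_pos by (intro mult_left_mono) auto
    also have "\<dots> \<le> C * N"
      using mult_left_mono[OF start(3) C(1)] False by (simp add: mult_ac)
    finally show ?thesis .
  qed
  then show ?thesis
    using that by blast
qed

lemma zone_solution_norm_bound:
  fixes W :: "'n::real_normed_vector \<Rightarrow> real \<Rightarrow> complex^2"
  assumes N: "0 < N"
    and W: "\<And>\<xi> t. T \<le> t \<Longrightarrow>
              (W \<xi> has_vector_derivative (sysmat (bcoef M) (norm \<xi>) t *v W \<xi> t)) (at t within {T..})"
  obtains K2 where "0 < K2" "\<And>t \<xi>. in_Zpsi \<alpha> T N t \<xi> \<Longrightarrow> \<xi> \<noteq> 0 \<Longrightarrow>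
    norm (W \<xi> t) \<le> K2 * norm (W \<xi> (zone_start \<alpha> T N \<xi>)) \<and>
    norm (W \<xi> (zone_start \<alpha> T N \<xi>)) \<le> K2 * norm (W \<xi> t)"
proof -
  obtain K where K: "\<And>W r a c.
    (\<And>t. T \<le> t \<Longrightarrow> (W has_vector_derivative (sysmat (bcoef M) r t *v W t)) (at t within {T..})) \<Longrightarrow>
    0 \<le> r \<Longrightarrow> T \<le> a \<Longrightarrow> a \<le> c \<Longrightarrow>
    norm (W c) \<le> exp (K + 2 * r * integral {a..c} (\<lambda>u. \<bar>I2 u\<bar>)) * norm (W a) \<and>
    norm (W a) \<le> exp (K + 2 * r * integral {a..c} (\<lambda>u. \<bar>I2 u\<bar>)) * norm (W c)"
    using solution_norm_equivalence by blast
  obtain C where C: "\<And>t (\<xi> :: 'n). in_Zpsi \<alpha> T N t \<xi> \<Longrightarrow> \<xi> \<noteq> 0 \<Longrightarrow>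
      norm \<xi> * integral {zone_start \<alpha> T N \<xi>..t} (\<lambda>u. \<bar>I2 u\<bar>) \<le> C"
    using zone_integral_abs_I2_bound[OF N] by blast
  have "norm (W \<xi> t) \<le> exp (K + 2 * C) * norm (W \<xi> (zone_start \<alpha> T N \<xi>)) \<and>
      norm (W \<xi> (zone_start \<alpha> T N \<xi>)) \<le> exp (K + 2 * C) * norm (W \<xi> t)"
    if zone: "in_Zpsi \<alpha> T N t \<xi>" "\<xi> \<noteq> 0" for t \<xi>
  proof -
    have "exp (K + 2 * norm \<xi> * integral {zone_start \<alpha> T N \<xi>..t} (\<lambda>u. \<bar>I2 u\<bar>)) \<le> exp (K + 2 * C)"
      using C[OF zone] by simp
    then show ?thesis
      using K[OF W[of _ \<xi>] norm_ge_zero zone_start_bounds(1,2)[OF T_pos N zone(2,1)]]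
      by (meson mult_right_mono norm_ge_zero order_trans)
  qed
  then show ?thesis
    using that[of "exp (K + 2 * C)"] by simp
qed

end

theorem proposition2:
  fixes M :: "real \<Rightarrow> real" and \<alpha> \<beta> \<gamma> T N :: real
    and W :: "real^'n \<Rightarrow> real \<Rightarrow> complex^2"
  assumes "standing_assumptions M \<alpha> \<beta> \<gamma>"
    and "admissible_T M T"
    and "N > 0"
    and "\<And>\<xi> t. t \<ge> T \<Longrightarrow>
           (W \<xi> has_vector_derivative (sysmat (bcoef M) (norm \<xi>) t *v W \<xi> t)) (at t within {T..})"
  shows "\<exists>K2>0. \<forall>t \<xi>. in_Zpsi \<alpha> T N t \<xi> \<and> \<xi> \<noteq> 0 \<longrightarrow>
           (\<alpha> > 0 \<longrightarrow> norm (W \<xi> T) / K2 \<le> norm (W \<xi> t) \<and> norm (W \<xi> t) \<le> K2 * norm (W \<xi> T)) \<and>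
           (\<alpha> \<le> 0 \<longrightarrow> norm (W \<xi> (t_xi \<alpha> T N \<xi>)) / K2 \<le> norm (W \<xi> t) \<and>
                      norm (W \<xi> t) \<le> K2 * norm (W \<xi> (t_xi \<alpha> T N \<xi>)))"
proof -
  interpret standing_setting M \<alpha> \<beta> \<gamma> T
    using assms(1,2) by unfold_locales
  obtain K2 where "0 < K2" and K2: "\<And>t \<xi>. in_Zpsi \<alpha> T N t \<xi> \<Longrightarrow> \<xi> \<noteq> 0 \<Longrightarrow>
      norm (W \<xi> t) \<le> K2 * norm (W \<xi> (zone_start \<alpha> T N \<xi>)) \<and>
      norm (W \<xi> (zone_start \<alpha> T N \<xi>)) \<le> K2 * norm (W \<xi> t)"
    using zone_solution_norm_bound[OF assms(3,4)] by blast
  show ?thesis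
    using \<open>0 < K2\<close> K2 by (intro exI[of _ K2]) (auto simp: zone_start_def divide_le_eq mult.commute)
qed

end
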